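(* (a) Let $\Lambda>0$ and let $Q_1,Q_2:[0,\Lambda]\to\mathbb R$ be continuous and strictly monotone, both strictly increasing or both strictly decreasing. Then there is a unique $\lambda_1\in\arg\min_{\lambda\in[0,\Lambda]}\bigl(Q_1(\lambda)-Q_2(\Lambda-\lambda)\bigr)^2$, i.e. the Wardrop equilibrium $(\lambda_1,\Lambda-\lambda_1)$ exists and is unique. (b) For a platform $i$ with static price $\phi_i\in[0,\phi_h]$ and abandonment rate $\beta_i>0$, the maps $\lambda_i\mapsto\mathcal D_i(\lambda_i)$ and $\lambda_i\mapsto\mathcal B_i(\lambda_i)$, $\lambda_i\ge0$, are continuous and strictly monotone, with the same direction of monotonicity for both platforms, so each of $Q_i=\mathcal D_i$ and $Q_i=\mathcal B_i$ satisfies the hypothesis of (a).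
   Context: Model of platform $i$: passengers arrive as a Poisson process of rate $\lambda_i$; drivers arrive as a Poisson process of rate $\eta_i$ and wait FCFS. A passenger arriving when at least one driver waits is quoted price $\phi_i\in[0,\phi_h]$ and accepts (beginning a ride) with probability $f(\phi_i)$, else leaves; if no driver waits, the passenger is lost. Waiting drivers abandon independently at rate $\beta_i$; rides/breaks last Exp($\nu_i$), after which the driver rejoins the waiting queue with probability $p_i\in[0,1)$ and leaves otherwise. $e_i=\eta_i/(1-p_i)$. Here $f:[0,\phi_h]\to(0,1]$ is strictly concave, strictly decreasing, differentiable, $f(0)=1$. $\mathcal D_i(\lambda_i)=\bigl(\sum_{n\ge0}\frac{e_i^n}{\prod_{a=1}^n(\lambda_i f(\phi_i)+a\beta_i)}\bigr)^{-1}$ is the stationary probability of no waiting driver (empty product $=1$), and $\mathcal B_i=\mathcal D_i+(1-f(\phi_i))(1-\mathcal D_i)$ is the long-run fraction of passengers who do not take a ride. Two platforms share total passenger rate $\Lambda$; the Wardrop equilibrium for QoS metrics $Q_i$ is defined by the argmin in (a). *)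

theory Defs
  imports "HOL-Analysis.Analysis"
begin

definition eff_rate :: "real \<Rightarrow> real \<Rightarrow> real" where
  "eff_rate eta p = eta / (1 - p)"

text \<open>D_i(lambda): stationary probability of no waiting driver, for driver arrival rate eta,
  rejoin probability p, acceptance function f, price phi, abandonment rate beta.\<close>
definition prob_no_driver ::
  "real \<Rightarrow> real \<Rightarrow> (real \<Rightarrow> real) \<Rightarrow> real \<Rightarrow> real \<Rightarrow> real \<Rightarrow> real" where
  "prob_no_driver eta p f phi beta lam =
     1 / (\<Sum>n. (eff_rate eta p) ^ n / (\<Prod>a=1..n. (lam * f phi + real a * beta)))"

definition frac_no_ride ::
  "real \<Rightarrow> real \<Rightarrow> (real \<Rightarrow> real) \<Rightarrow> real \<Rightarrow> real \<Rightarrow> real \<Rightarrow> real" where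
  "frac_no_ride eta p f phi beta lam =
     prob_no_driver eta p f phi beta lam
     + (1 - f phi) * (1 - prob_no_driver eta p f phi beta lam)"

definition same_strict_mono :: "real set \<Rightarrow> (real \<Rightarrow> real) \<Rightarrow> (real \<Rightarrow> real) \<Rightarrow> bool" where
  "same_strict_mono S g h \<longleftrightarrow>
     (strict_mono_on S g \<and> strict_mono_on S h) \<or> (strict_antimono_on S g \<and> strict_antimono_on S h)"

end

theory Submission imports Defs begin

(*
  (a) The excess g(l) = Q1 l - Q2 (Lam - l) is continuous and injective on [0, Lam]. By
  compactness g^2 attains its minimum; two distinct minimisers would have g-values of equal
  modulus, hence of opposite signs, and the intermediate value theorem would give a zero of g
  between them, contradicting minimality.

  (b) D(lam) = 1 / S(lam f(phi)) with S x = sum_n e^n / prod_{a=1..n} (x + a beta). Every term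
  of S is nonincreasing in x, strictly for n >= 1, and bounded by (e/beta)^n / n!, so S is
  continuous and strictly decreasing on [0, oo). Hence D and B = 1 - f(phi) + f(phi) D are
  continuous and strictly increasing, for both platforms.
*)

lemma continuous_on_suminf_dominated:
  fixes f :: "nat \<Rightarrow> 'a::topological_space \<Rightarrow> 'b::banach"
  assumes "\<And>n. continuous_on A (f n)"
    and "\<And>n x. x \<in> A \<Longrightarrow> norm (f n x) \<le> M n" and "summable M"
  shows "continuous_on A (\<lambda>x. \<Sum>n. f n x)"
proof (rule uniform_limit_theorem)
  show "uniform_limit A (\<lambda>n x. \<Sum>i<n. f i x) (\<lambda>x. \<Sum>n. f n x) sequentially"
    using assms(2,3) by (rule Weierstrass_m_test)
  show "\<forall>\<^sub>F n in sequentially. continuous_on A (\<lambda>x. \<Sum>i<n. f i x)"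
    using assms(1) by (intro always_eventually allI continuous_on_sum) auto
qed simp

lemma argmin_square_unique:
  fixes g :: "real \<Rightarrow> real"
  assumes "a \<le> b" and cont: "continuous_on {a..b} g" and inj: "inj_on g {a..b}"
  shows "\<exists>!l. l \<in> {a..b} \<and> (\<forall>m\<in>{a..b}. (g l)\<^sup>2 \<le> (g m)\<^sup>2)"
proof -
  have minimiser_le: "l\<^sub>1 \<le> l\<^sub>2"
    if l\<^sub>1: "l\<^sub>1 \<in> {a..b}" "\<forall>m\<in>{a..b}. (g l\<^sub>1)\<^sup>2 \<le> (g m)\<^sup>2"
      and l\<^sub>2: "l\<^sub>2 \<in> {a..b}" "\<forall>m\<in>{a..b}. (g l\<^sub>2)\<^sup>2 \<le> (g m)\<^sup>2" for l\<^sub>1 l\<^sub>2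
  proof (rule ccontr)
    assume "\<not> l\<^sub>1 \<le> l\<^sub>2"
    then have "l\<^sub>2 < l\<^sub>1" by simp
    have "(g l\<^sub>1)\<^sup>2 \<le> (g l\<^sub>2)\<^sup>2" "(g l\<^sub>2)\<^sup>2 \<le> (g l\<^sub>1)\<^sup>2"
      using l\<^sub>1 l\<^sub>2 by blast+
    moreover have "g l\<^sub>1 \<noteq> g l\<^sub>2"
      using inj_onD[OF inj _ l\<^sub>1(1) l\<^sub>2(1)] \<open>l\<^sub>2 < l\<^sub>1\<close> by auto
    ultimately have opposite: "g l\<^sub>2 = - g l\<^sub>1" and "g l\<^sub>1 \<noteq> 0"
      by (auto simp: power2_eq_iff)
    have "continuous_on {l\<^sub>2..l\<^sub>1} g"
      by (rule continuous_on_subset[OF cont]) (use l\<^sub>1(1) l\<^sub>2(1) in auto)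
    moreover have "g l\<^sub>2 \<le> 0 \<and> 0 \<le> g l\<^sub>1 \<or> g l\<^sub>1 \<le> 0 \<and> 0 \<le> g l\<^sub>2"
      using opposite by linarith
    ultimately obtain z where "l\<^sub>2 \<le> z" "z \<le> l\<^sub>1" "g z = 0"
      using IVT'[of g l\<^sub>2 0 l\<^sub>1] IVT2'[of g l\<^sub>1 0 l\<^sub>2] \<open>l\<^sub>2 < l\<^sub>1\<close> by fastforce
    then have "z \<in> {a..b}" and "g z = 0"
      using l\<^sub>1(1) l\<^sub>2(1) by auto
    then have "(g l\<^sub>1)\<^sup>2 \<le> 0"
      using l\<^sub>1(2) by fastforce
    with \<open>g l\<^sub>1 \<noteq> 0\<close> show False by simp
  qed
  have "continuous_on {a..b} (\<lambda>x. (g x)\<^sup>2)"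
    using cont by (intro continuous_intros)
  then obtain l where l: "l \<in> {a..b}" "\<forall>m\<in>{a..b}. (g l)\<^sup>2 \<le> (g m)\<^sup>2"
    using continuous_attains_inf[of "{a..b}" "\<lambda>x. (g x)\<^sup>2"] \<open>a \<le> b\<close> by auto
  show ?thesis
  proof (rule ex1I[of _ l])
    fix l' assume "l' \<in> {a..b} \<and> (\<forall>m\<in>{a..b}. (g l')\<^sup>2 \<le> (g m)\<^sup>2)"
    then show "l' = l"
      using minimiser_le[of l' l] minimiser_le[of l l'] l by simp
  qed (use l in blast)
qed

lemma same_strict_mono_imp_inj_on_excess:
  fixes Q\<^sub>1 Q\<^sub>2 :: "real \<Rightarrow> real"
  assumes "same_strict_mono {0..Lam} Q\<^sub>1 Q\<^sub>2"
  shows "inj_on (\<lambda>l. Q\<^sub>1 l - Q\<^sub>2 (Lam - l)) {0..Lam}"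
proof (rule linorder_inj_onI')
  fix x y assume xy: "x \<in> {0..Lam}" "y \<in> {0..Lam}" "x < y"
  then have reflected: "Lam - y \<in> {0..Lam}" "Lam - x \<in> {0..Lam}" "Lam - y < Lam - x"
    by auto
  from assms consider
      (increasing) "strict_mono_on {0..Lam} Q\<^sub>1" "strict_mono_on {0..Lam} Q\<^sub>2"
    | (decreasing) "strict_antimono_on {0..Lam} Q\<^sub>1" "strict_antimono_on {0..Lam} Q\<^sub>2"
    unfolding same_strict_mono_def by blast
  then show "Q\<^sub>1 x - Q\<^sub>2 (Lam - x) \<noteq> Q\<^sub>1 y - Q\<^sub>2 (Lam - y)"
  proof cases
    case increasing
    then show ?thesis
      using monotone_onD[OF increasing(1) xy] monotone_onD[OF increasing(2) reflected] by linarith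
  next
    case decreasing
    then show ?thesis
      using monotone_onD[OF decreasing(1) xy] monotone_onD[OF decreasing(2) reflected] by linarith
  qed
qed

theorem wardrop_equilibrium_unique:
  fixes Q\<^sub>1 Q\<^sub>2 :: "real \<Rightarrow> real"
  assumes "Lam > 0" "continuous_on {0..Lam} Q\<^sub>1" "continuous_on {0..Lam} Q\<^sub>2"
    and "same_strict_mono {0..Lam} Q\<^sub>1 Q\<^sub>2"
  shows "\<exists>!l. l \<in> {0..Lam} \<and>
           (\<forall>m\<in>{0..Lam}. (Q\<^sub>1 l - Q\<^sub>2 (Lam - l))\<^sup>2 \<le> (Q\<^sub>1 m - Q\<^sub>2 (Lam - m))\<^sup>2)"
proof (rule argmin_square_unique[of 0 Lam "\<lambda>l. Q\<^sub>1 l - Q\<^sub>2 (Lam - l)"])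
  have "continuous_on {0..Lam} (\<lambda>l. Q\<^sub>2 (Lam - l))"
    using assms(3) by (rule continuous_on_compose2) (auto intro!: continuous_intros)
  then show "continuous_on {0..Lam} (\<lambda>l. Q\<^sub>1 l - Q\<^sub>2 (Lam - l))"
    using assms(2) by (intro continuous_intros)
  show "inj_on (\<lambda>l. Q\<^sub>1 l - Q\<^sub>2 (Lam - l)) {0..Lam}"
    using assms(4) by (rule same_strict_mono_imp_inj_on_excess)
qed (use assms(1) in simp)

definition queue_term :: "real \<Rightarrow> real \<Rightarrow> real \<Rightarrow> nat \<Rightarrow> real" where
  "queue_term e beta x n = e ^ n / (\<Prod>a=1..n. x + real a * beta)"

definition queue_partition :: "real \<Rightarrow> real \<Rightarrow> real \<Rightarrow> real" where
  "queue_partition e beta x = (\<Sum>n. queue_term e beta x n)"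

lemma prod_shifted_pos:
  fixes x beta :: real
  assumes "0 \<le> x" "0 < beta"
  shows "0 < (\<Prod>a=1..n. x + real a * beta)"
  using assms by (intro prod_pos) (auto intro!: add_nonneg_pos)

lemma queue_term_pos:
  assumes "0 \<le> x" "0 < beta" "0 < e"
  shows "0 < queue_term e beta x n"
  using assms prod_shifted_pos[OF assms(1,2)] by (simp add: queue_term_def)

lemma queue_term_antimono:
  assumes "0 \<le> x" "x \<le> y" "0 < beta" "0 \<le> e"
  shows "queue_term e beta y n \<le> queue_term e beta x n"
proof -
  have "(\<Prod>a=1..n. x + real a * beta) \<le> (\<Prod>a=1..n. y + real a * beta)"
    using assms by (intro prod_mono) auto
  then show ?thesis
    unfolding queue_term_def using assms prod_shifted_pos[of x beta n] prod_shifted_pos[of y beta n]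
    by (intro divide_left_mono mult_pos_pos) auto
qed

lemma queue_term_le_exp_term:
  assumes "0 \<le> x" "0 < beta" "0 \<le> e"
  shows "queue_term e beta x n \<le> inverse (fact n) * (e / beta) ^ n"
proof -
  have "queue_term e beta x n \<le> queue_term e beta 0 n"
    using assms by (intro queue_term_antimono) auto
  also have "(\<Prod>a=1..n. real a * beta) = fact n * beta ^ n"
    by (simp add: prod.distrib fact_prod)
  then have "queue_term e beta 0 n = inverse (fact n) * (e / beta) ^ n"
    using assms(2) by (simp add: queue_term_def power_divide field_simps)
  finally show ?thesis .
qed

lemma summable_queue_term:
  assumes "0 \<le> x" "0 < beta" "0 < e"
  shows "summable (queue_term e beta x)"
proof (rule summable_comparison_test'[where N = 0])
  show "summable (\<lambda>n. inverse (fact n) * (e / beta) ^ n)"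
    by (rule summable_exp)
  show "norm (queue_term e beta x n) \<le> inverse (fact n) * (e / beta) ^ n" for n
    using assms queue_term_pos[OF assms] queue_term_le_exp_term[of x beta e n]
    by (simp add: abs_of_pos)
qed

lemma queue_partition_pos:
  assumes "0 \<le> x" "0 < beta" "0 < e"
  shows "0 < queue_partition e beta x"
  unfolding queue_partition_def
  using summable_queue_term[OF assms] queue_term_pos[OF assms] by (rule suminf_pos)

lemma continuous_on_queue_partition:
  assumes "0 < beta" "0 < e"
  shows "continuous_on {0..} (queue_partition e beta)"
  unfolding queue_partition_def[abs_def]
proof (rule continuous_on_suminf_dominated)
  show "continuous_on {0..} (\<lambda>x. queue_term e beta x n)" for n
    unfolding queue_term_def using prod_shifted_pos[OF _ assms(1)]
    by (intro continuous_intros) (auto simp: less_imp_neq[symmetric])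
  show "norm (queue_term e beta x n) \<le> inverse (fact n) * (e / beta) ^ n" if "x \<in> {0..}" for x n
    using that assms queue_term_pos[of x beta e n] queue_term_le_exp_term[of x beta e n]
    by (simp add: abs_of_pos)
  show "summable (\<lambda>n. inverse (fact n) * (e / beta) ^ n)"
    by (rule summable_exp)
qed

lemma queue_partition_strict_antimono:
  assumes "0 < beta" "0 < e"
  shows "strict_antimono_on {0..} (queue_partition e beta)"
proof (rule monotone_onI)
  fix x y :: real assume "x \<in> {0..}" "y \<in> {0..}" "x < y"
  then have "0 \<le> x" "0 \<le> y" by auto
  with assms have summable: "summable (queue_term e beta x)" "summable (queue_term e beta y)"
    by (auto intro: summable_queue_term)
  have "0 < (\<Sum>n. queue_term e beta x n - queue_term e beta y n)"
  proof (rule suminf_pos2[of _ 1])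
    show "summable (\<lambda>n. queue_term e beta x n - queue_term e beta y n)"
      using summable by (rule summable_diff)
    show "0 \<le> queue_term e beta x n - queue_term e beta y n" for n
      using assms \<open>0 \<le> x\<close> \<open>x < y\<close> queue_term_antimono[of x y beta e n] by simp
    have "e / (y + beta) < e / (x + beta)"
      using assms \<open>0 \<le> x\<close> \<open>x < y\<close> by (intro divide_strict_left_mono) auto
    then show "0 < queue_term e beta x 1 - queue_term e beta y 1"
      by (simp add: queue_term_def)
  qed
  then show "queue_partition e beta y < queue_partition e beta x"
    unfolding queue_partition_def
    using suminf_diff[OF summable] by simp
qed

lemma prob_no_driver_eq:
  "prob_no_driver eta p f phi beta lam = 1 / queue_partition (eff_rate eta p) beta (lam * f phi)"
  by (simp add: prob_no_driver_def queue_partition_def queue_term_def)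

lemma frac_no_ride_eq:
  "frac_no_ride eta p f phi beta lam = 1 - f phi + f phi * prob_no_driver eta p f phi beta lam"
  by (simp add: frac_no_ride_def algebra_simps)

lemma eff_rate_pos: "0 < eta \<Longrightarrow> p < 1 \<Longrightarrow> 0 < eff_rate eta p"
  by (simp add: eff_rate_def)

lemma continuous_on_prob_no_driver:
  assumes "0 < eta" "p < 1" "0 < beta" "0 < f phi"
  shows "continuous_on {0..} (prob_no_driver eta p f phi beta)"
proof -
  note e = eff_rate_pos[OF assms(1,2)]
  have "continuous_on {0..} (\<lambda>lam. queue_partition (eff_rate eta p) beta (lam * f phi))"
    by (rule continuous_on_compose2[OF continuous_on_queue_partition[OF assms(3) e]])
      (use assms(4) in \<open>auto intro!: continuous_intros\<close>)
  then show ?thesis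
    unfolding prob_no_driver_eq[abs_def]
    using queue_partition_pos[OF _ assms(3) e] assms(4)
    by (intro continuous_intros) (auto simp: less_imp_neq[symmetric])
qed

lemma prob_no_driver_strict_mono:
  assumes "0 < eta" "p < 1" "0 < beta" "0 < f phi"
  shows "strict_mono_on {0..} (prob_no_driver eta p f phi beta)"
proof (rule strict_mono_onI)
  fix x y :: real assume "x \<in> {0..}" "y \<in> {0..}" "x < y"
  with assms(4) have xy: "x * f phi \<in> {0..}" "y * f phi \<in> {0..}" "x * f phi < y * f phi"
    by auto
  note e = eff_rate_pos[OF assms(1,2)]
  show "prob_no_driver eta p f phi beta x < prob_no_driver eta p f phi beta y"
    unfolding prob_no_driver_eq
    using monotone_onD[OF queue_partition_strict_antimono[OF assms(3) e] xy]
      queue_partition_pos[OF _ assms(3) e] xy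
    by (intro divide_strict_left_mono) auto
qed

lemma continuous_on_frac_no_ride:
  assumes "0 < eta" "p < 1" "0 < beta" "0 < f phi"
  shows "continuous_on {0..} (frac_no_ride eta p f phi beta)"
  unfolding frac_no_ride_eq[abs_def]
  using continuous_on_prob_no_driver[of eta p beta f phi] assms by (intro continuous_intros)

lemma frac_no_ride_strict_mono:
  assumes "0 < eta" "p < 1" "0 < beta" "0 < f phi"
  shows "strict_mono_on {0..} (frac_no_ride eta p f phi beta)"
  using strict_mono_onD[OF prob_no_driver_strict_mono[of eta p beta f phi]] assms
  by (intro strict_mono_onI) (simp add: frac_no_ride_eq)

theorem lemma2:
  fixes f :: "real \<Rightarrow> real" and phi_h :: real
    and eta1 eta2 p1 p2 beta1 beta2 phi1 phi2 :: real
  assumes phi_h: "phi_h > 0"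
    and f_range: "\<forall>x\<in>{0..phi_h}. 0 < f x \<and> f x \<le> 1"
    and f0: "f 0 = 1"
    and f_dec: "strict_antimono_on {0..phi_h} f"
    and f_concave: "\<forall>x\<in>{0..phi_h}. \<forall>y\<in>{0..phi_h}. \<forall>t::real. x \<noteq> y \<and> 0 < t \<and> t < 1 \<longrightarrow>
                      f (t * x + (1 - t) * y) > t * f x + (1 - t) * f y"
    and f_diff: "\<forall>x\<in>{0..phi_h}. f differentiable (at x within {0..phi_h})"
    and eta: "eta1 > 0" "eta2 > 0"
    and p: "0 \<le> p1" "p1 < 1" "0 \<le> p2" "p2 < 1"
    and beta: "beta1 > 0" "beta2 > 0"
    and phi: "phi1 \<in> {0..phi_h}" "phi2 \<in> {0..phi_h}"
  shows
    "(\<forall>(Lam::real) (Q1::real \<Rightarrow> real) (Q2::real \<Rightarrow> real).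
        Lam > 0 \<and> continuous_on {0..Lam} Q1 \<and> continuous_on {0..Lam} Q2
        \<and> same_strict_mono {0..Lam} Q1 Q2 \<longrightarrow>
        (\<exists>!l. l \<in> {0..Lam} \<and>
           (\<forall>m\<in>{0..Lam}. (Q1 l - Q2 (Lam - l))\<^sup>2 \<le> (Q1 m - Q2 (Lam - m))\<^sup>2)))
     \<and> continuous_on {0..} (prob_no_driver eta1 p1 f phi1 beta1)
     \<and> continuous_on {0..} (prob_no_driver eta2 p2 f phi2 beta2)
     \<and> continuous_on {0..} (frac_no_ride eta1 p1 f phi1 beta1)
     \<and> continuous_on {0..} (frac_no_ride eta2 p2 f phi2 beta2)
     \<and> same_strict_mono {0..} (prob_no_driver eta1 p1 f phi1 beta1)
                              (prob_no_driver eta2 p2 f phi2 beta2)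
     \<and> same_strict_mono {0..} (frac_no_ride eta1 p1 f phi1 beta1)
                              (frac_no_ride eta2 p2 f phi2 beta2)"
proof -
  have platform1: "0 < eta1" "p1 < 1" "0 < beta1" "0 < f phi1"
    and platform2: "0 < eta2" "p2 < 1" "0 < beta2" "0 < f phi2"
    using eta p beta f_range phi by auto
  show ?thesis
    using wardrop_equilibrium_unique
    by (simp add: same_strict_mono_def[of "{0..}"] platform1 platform2
        continuous_on_prob_no_driver continuous_on_frac_no_ride
        prob_no_driver_strict_mono frac_no_ride_strict_mono)
qed

end
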